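(* Let $p,q$ be distinct propositional letters and $\alpha:=p\to(q\looparrowright p)$. The logic $\mathcal{F}\alpha$ is Epstein incomplete, i.e. there is no set $X$ of Epstein relations such that $\mathcal{F}\alpha=\{\varphi\in\mathsf{FOR}:\mathfrak{R}\vDash\varphi\text{ for all }\mathfrak{R}\in X\}$.
   Context: Language: propositional letters $\Phi=\{p_0,p_1,\dots\}$; connectives $\neg$, $\lor,\wedge,\to,\leftrightarrow,\vartriangle,\looparrowright$; $\mathsf{FOR}$ the set of all formulas. An Epstein model is $\langle v,\mathfrak{R}\rangle$ with $v:\Phi\to\{0,1\}$ and $\mathfrak{R}\subseteq\mathsf{FOR}^2$ (an Epstein relation); truth: letters via $v$, boolean connectives classical, $\langle v,\mathfrak{R}\rangle\vDash\varphi\vartriangle\psi$ iff both true and $\langle\varphi,\psi\rangle\in\mathfrak{R}$; $\langle v,\mathfrak{R}\rangle\vDash\varphi\looparrowright\psi$ iff $\varphi\to\psi$ true and $\langle\varphi,\psi\rangle\in\mathfrak{R}$. $\mathfrak{R}\vDash\varphi$ iff true under every valuation. $\mathcal{F}$ is the least set containing all classical tautologies of the language and the axioms $(p\looparrowright q)\to(p\to q)$, $(p\vartriangle q)\leftrightarrow((p\looparrowright q)\wedge(p\wedge q))$, closed under uniform substitution and modus ponens; $\mathcal{F}\alpha$ is the least set containing $\mathcal{F}\cup\{\alpha\}$ closed under uniform substitution and modus ponens. *)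

theory Defs
  imports Main
begin

datatype frm =
    Var nat
  | Neg frm
  | Disj frm frm
  | Conj frm frm
  | Imp frm frm
  | Iff frm frm
  | Tri frm frm   (* \<vartriangle> *)
  | Loop frm frm  (* \<looparrowright> *)

(* Classical evaluation: letters and the intensional formulas Tri/Loop are
   treated as propositional atoms, evaluated by w. *)
fun ceval :: "(frm \<Rightarrow> bool) \<Rightarrow> frm \<Rightarrow> bool" where
  "ceval w (Var n) = w (Var n)"
| "ceval w (Neg a) = (\<not> ceval w a)"
| "ceval w (Disj a b) = (ceval w a \<or> ceval w b)"
| "ceval w (Conj a b) = (ceval w a \<and> ceval w b)"
| "ceval w (Imp a b) = (ceval w a \<longrightarrow> ceval w b)"
| "ceval w (Iff a b) = (ceval w a \<longleftrightarrow> ceval w b)"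
| "ceval w (Tri a b) = w (Tri a b)"
| "ceval w (Loop a b) = w (Loop a b)"

definition taut :: "frm \<Rightarrow> bool" where
  "taut \<phi> \<longleftrightarrow> (\<forall>w. ceval w \<phi>)"

fun subst :: "(nat \<Rightarrow> frm) \<Rightarrow> frm \<Rightarrow> frm" where
  "subst s (Var n) = s n"
| "subst s (Neg a) = Neg (subst s a)"
| "subst s (Disj a b) = Disj (subst s a) (subst s b)"
| "subst s (Conj a b) = Conj (subst s a) (subst s b)"
| "subst s (Imp a b) = Imp (subst s a) (subst s b)"
| "subst s (Iff a b) = Iff (subst s a) (subst s b)"
| "subst s (Tri a b) = Tri (subst s a) (subst s b)"
| "subst s (Loop a b) = Loop (subst s a) (subst s b)"

(* Logic generated by F's axioms plus extra axioms A, closed under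
   uniform substitution and modus ponens. F = Flog {}, F\<alpha> = Flog {\<alpha>}. *)
inductive_set Flog :: "frm set \<Rightarrow> frm set" for A :: "frm set" where
  tautI: "taut \<phi> \<Longrightarrow> \<phi> \<in> Flog A"
| ax1: "Imp (Loop (Var 0) (Var 1)) (Imp (Var 0) (Var 1)) \<in> Flog A"
| ax2: "Iff (Tri (Var 0) (Var 1))
            (Conj (Loop (Var 0) (Var 1)) (Conj (Var 0) (Var 1))) \<in> Flog A"
| extra: "\<phi> \<in> A \<Longrightarrow> \<phi> \<in> Flog A"
| substI: "\<phi> \<in> Flog A \<Longrightarrow> subst s \<phi> \<in> Flog A"
| mp: "Imp \<phi> \<psi> \<in> Flog A \<Longrightarrow> \<phi> \<in> Flog A \<Longrightarrow> \<psi> \<in> Flog A"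

fun etrue :: "(nat \<Rightarrow> bool) \<Rightarrow> (frm \<times> frm) set \<Rightarrow> frm \<Rightarrow> bool" where
  "etrue v R (Var n) = v n"
| "etrue v R (Neg a) = (\<not> etrue v R a)"
| "etrue v R (Disj a b) = (etrue v R a \<or> etrue v R b)"
| "etrue v R (Conj a b) = (etrue v R a \<and> etrue v R b)"
| "etrue v R (Imp a b) = (etrue v R a \<longrightarrow> etrue v R b)"
| "etrue v R (Iff a b) = (etrue v R a \<longleftrightarrow> etrue v R b)"
| "etrue v R (Tri a b) = (etrue v R a \<and> etrue v R b \<and> (a, b) \<in> R)"
| "etrue v R (Loop a b) = ((etrue v R a \<longrightarrow> etrue v R b) \<and> (a, b) \<in> R)"

definition evalid :: "(frm \<times> frm) set \<Rightarrow> frm \<Rightarrow> bool" where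
  "evalid R \<phi> \<longleftrightarrow> (\<forall>v. etrue v R \<phi>)"

definition epstein_complete :: "frm set \<Rightarrow> bool" where
  "epstein_complete L \<longleftrightarrow>
     (\<exists>X :: (frm \<times> frm) set set. L = {\<phi>. \<forall>R\<in>X. evalid R \<phi>})"

end

theory Submission
  imports Defs
begin

text \<open>Every Epstein relation validating \<open>\<alpha> = p \<rightarrow> (q \<looparrowright> p)\<close> contains \<open>(q, p)\<close> (take the
  valuation making everything true), hence also validates \<open>\<theta> = (q \<rightarrow> p) \<rightarrow> (q \<looparrowright> p)\<close>.
  So an Epstein-complete \<open>\<F>\<alpha>\<close> would contain \<open>\<theta>\<close>. But reading \<open>\<phi> \<looparrowright> \<psi>\<close> as \<open>\<psi>\<close> and
  \<open>\<phi> \<vartriangle> \<psi>\<close> as \<open>\<phi> \<and> \<psi>\<close> validates the axioms of \<open>\<F>\<close> and \<open>\<alpha>\<close> and is preserved by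
  substitution and modus ponens, whereas it refutes \<open>\<theta>\<close> when all letters are false.
  The argument does not need \<open>p \<noteq> q\<close>.\<close>

fun rhs_eval :: "(nat \<Rightarrow> bool) \<Rightarrow> frm \<Rightarrow> bool" where
  "rhs_eval v (Var n) = v n"
| "rhs_eval v (Neg a) = (\<not> rhs_eval v a)"
| "rhs_eval v (Disj a b) = (rhs_eval v a \<or> rhs_eval v b)"
| "rhs_eval v (Conj a b) = (rhs_eval v a \<and> rhs_eval v b)"
| "rhs_eval v (Imp a b) = (rhs_eval v a \<longrightarrow> rhs_eval v b)"
| "rhs_eval v (Iff a b) = (rhs_eval v a \<longleftrightarrow> rhs_eval v b)"
| "rhs_eval v (Tri a b) = (rhs_eval v a \<and> rhs_eval v b)"
| "rhs_eval v (Loop a b) = rhs_eval v b"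

lemma ceval_rhs_eval: "ceval (rhs_eval v) \<phi> = rhs_eval v \<phi>"
  by (induction \<phi>) auto

lemma rhs_eval_subst: "rhs_eval v (subst s \<phi>) = rhs_eval (\<lambda>n. rhs_eval v (s n)) \<phi>"
  by (induction \<phi>) auto

lemma Flog_rhs_eval_sound:
  assumes "\<phi> \<in> Flog A" and "\<And>\<psi> v. \<psi> \<in> A \<Longrightarrow> rhs_eval v \<psi>"
  shows "rhs_eval v \<phi>"
  using assms(1)
proof (induction arbitrary: v rule: Flog.induct)
  case (tautI \<phi>)
  then show ?case unfolding taut_def by (metis ceval_rhs_eval)
next
  case (substI \<phi> s)
  then show ?case by (simp add: rhs_eval_subst)
qed (auto simp: assms(2))

lemma epstein_complete_closed_under_consequence:
  assumes "epstein_complete L" and "\<phi> \<in> L" and "\<And>R. evalid R \<phi> \<Longrightarrow> evalid R \<psi>"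
  shows "\<psi> \<in> L"
  using assms unfolding epstein_complete_def by blast

lemma evalid_imp_loop_var_in_relation:
  assumes "evalid R (Imp (Var p) (Loop (Var q) (Var p)))"
  shows "(Var q, Var p) \<in> R"
  using assms[unfolded evalid_def, rule_format, of "\<lambda>_. True"] by simp

lemma evalid_imp_loop_if_in_relation:
  assumes "(\<psi>, \<phi>) \<in> R"
  shows "evalid R (Imp (Imp \<psi> \<phi>) (Loop \<psi> \<phi>))"
  using assms unfolding evalid_def by simp

theorem mainTheorem6:
  fixes p q :: nat
  assumes "p \<noteq> q"
  shows "\<not> epstein_complete (Flog {Imp (Var p) (Loop (Var q) (Var p))})"
proof
  let ?\<alpha> = "Imp (Var p) (Loop (Var q) (Var p))"
  let ?\<theta> = "Imp (Imp (Var q) (Var p)) (Loop (Var q) (Var p))"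
  assume "epstein_complete (Flog {?\<alpha>})"
  moreover have "?\<alpha> \<in> Flog {?\<alpha>}" by (simp add: Flog.extra)
  ultimately have "?\<theta> \<in> Flog {?\<alpha>}"
    by (rule epstein_complete_closed_under_consequence)
      (metis evalid_imp_loop_var_in_relation evalid_imp_loop_if_in_relation)
  then have "rhs_eval (\<lambda>_. False) ?\<theta>"
    by (rule Flog_rhs_eval_sound) auto
  then show False by simp
qed

end
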